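(* There exist a common knowledge debate game, a common knowledge distinguishing debate game, and a private information distinguishing debate game each of which has the following property: the minimum error over all policies is strictly less than the minimum error over policies $M$ whose image is contained in $\{0,1\}$.
   Context: Let $\delta$ be a special default action. CKDG: a tuple $(A_1,A_2,S,P,C_1,C_2,u)$ consisting of finite sets $A_i\not\ni\delta$, a finite set $S$, a probability mass function $P$ on $S$, maps $C_i:S\to\mathcal P(A_i)$, and $u:\{1,2\}\times S\to\mathbb R$. A policy is $M:\{1,2\}\times(A_1\cup\{\delta\})\times(A_2\cup\{\delta\})\to[0,1]$ with $M(1,\cdot,\cdot)+M(2,\cdot,\cdot)=1$. $w^i_M(s)$ is the value to agent $i$ of the zero-sum game with payoff matrix $M(i,\cdot,\cdot)$, with agent 1 restricted to $C_1(s)\cup\{\delta\}$ and agent 2 to $C_2(s)\cup\{\delta\}$. The error is $\mathbb E_{s\sim P}[\,|u(1,s)-u(2,s)|w^1_M(s)$ if $u(1,s)\le u(2,s)$, else $|u(1,s)-u(2,s)|w^2_M(s)\,]$. CKDDG: a tuple $(A,S,P,C_w,C_l)$ with $A$ finite, $\delta\notin A$, $S$ finite, $P$ a probability mass function on $S$, and $C_w,C_l:S\to\mathcal P(A)$. Policies and error are those of the induced CKDG $(A,A,\{1,2\}\times S,P',C'_1,C'_2,u')$, where: - $P'((i,s))=P(s)/2$; - $C'_j((i,s))=C_w(s)$ if $i=j$, else $C_l(s)$; - $u'(j,(i,s))=[i=j]$. PIDDG: a tuple of the same form as a CKDDG. A policy is $M:\{1,2\}\times(A\cup\{\delta\})^2\to[0,1]$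 with $M(1,\cdot,\cdot)+M(2,\cdot,\cdot)=1$. $G_1(B,M)$ is the following Bayesian game. Each agent has action set $A\cup\{\delta\}$. A scenario $s\sim P$ is drawn, and agent 1's type (set of available non-default actions) is $C_w(s)$ while agent 2's is $C_l(s)$. Payoffs are as follows: - if both agents play available actions, agent $i$ gets $M(i,a_1,a_2)$; - if exactly one plays an unavailable action, it gets $0$ and the other gets $1$; - if both play unavailable actions, each gets $1/2$. $G_2(B,M)$ swaps the types. The PIDDG error is $\frac{v_1(G_2(B,M))+v_2(G_1(B,M))}{2}$, where $v_i$ is the value of the zero-sum Bayesian game to agent $i$. Minimum errors over the relevant (compact) policy sets exist. *)

theory Defs
  imports Complex_Main
begin

text \<open>Encoding: an action set A (not containing the default action) over type 'a
  is a set of type 'a set; the extended action set A \<union> {default} is the set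
  insert None (Some ` A) of type 'a option set, the default action being None.
  Agents are numbered 1 and 2.\<close>

definition ext_actions :: "'a set \<Rightarrow> 'a option set" where
  "ext_actions A = insert None (Some ` A)"

definition is_pmf_on :: "'s set \<Rightarrow> ('s \<Rightarrow> real) \<Rightarrow> bool" where
  "is_pmf_on S P \<longleftrightarrow> finite S \<and> (\<forall>s\<in>S. 0 \<le> P s) \<and> sum P S = 1"

definition mixed :: "'x set \<Rightarrow> ('x \<Rightarrow> real) set" where
  "mixed X = {p. (\<forall>x\<in>X. 0 \<le> p x) \<and> sum p X = 1}"

definition mat_value :: "'x set \<Rightarrow> 'y set \<Rightarrow> ('x \<Rightarrow> 'y \<Rightarrow> real) \<Rightarrow> real" where
  "mat_value R C f =
     (SUP p \<in> mixed R. INF q \<in> mixed C. \<Sum>x\<in>R. \<Sum>y\<in>C. p x * q y * f x y)"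

definition is_ckdg ::
  "'a set \<Rightarrow> 'b set \<Rightarrow> 's set \<Rightarrow> ('s \<Rightarrow> real) \<Rightarrow> ('s \<Rightarrow> 'a set) \<Rightarrow> ('s \<Rightarrow> 'b set)
   \<Rightarrow> (nat \<Rightarrow> 's \<Rightarrow> real) \<Rightarrow> bool" where
  "is_ckdg A1 A2 S P C1 C2 u \<longleftrightarrow>
     finite A1 \<and> finite A2 \<and> finite S \<and> is_pmf_on S P \<and>
     (\<forall>s\<in>S. C1 s \<subseteq> A1 \<and> C2 s \<subseteq> A2)"

definition policies :: "'a set \<Rightarrow> 'b set \<Rightarrow> (nat \<Rightarrow> 'a option \<Rightarrow> 'b option \<Rightarrow> real) set" where
  "policies A1 A2 = {M.
     (\<forall>i\<in>{1,2}. \<forall>x\<in>ext_actions A1. \<forall>y\<in>ext_actions A2. 0 \<le> M i x y \<and> M i x y \<le> 1) \<and>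
     (\<forall>x\<in>ext_actions A1. \<forall>y\<in>ext_actions A2. M 1 x y + M 2 x y = 1) \<and>
     (\<forall>i x y. \<not> (i \<in> {1,2} \<and> x \<in> ext_actions A1 \<and> y \<in> ext_actions A2) \<longrightarrow> M i x y = 0)}"

definition det_policies :: "'a set \<Rightarrow> 'b set \<Rightarrow> (nat \<Rightarrow> 'a option \<Rightarrow> 'b option \<Rightarrow> real) set" where
  "det_policies A1 A2 = {M \<in> policies A1 A2. \<forall>i x y. M i x y \<in> {0,1}}"

definition ckdg_w ::
  "('s \<Rightarrow> 'a set) \<Rightarrow> ('s \<Rightarrow> 'b set) \<Rightarrow> (nat \<Rightarrow> 'a option \<Rightarrow> 'b option \<Rightarrow> real)
   \<Rightarrow> nat \<Rightarrow> 's \<Rightarrow> real" where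
  "ckdg_w C1 C2 M i s =
     (if i = 1 then mat_value (ext_actions (C1 s)) (ext_actions (C2 s)) (M 1)
      else mat_value (ext_actions (C2 s)) (ext_actions (C1 s)) (\<lambda>y x. M 2 x y))"

definition ckdg_err ::
  "'s set \<Rightarrow> ('s \<Rightarrow> real) \<Rightarrow> ('s \<Rightarrow> 'a set) \<Rightarrow> ('s \<Rightarrow> 'b set)
   \<Rightarrow> (nat \<Rightarrow> 's \<Rightarrow> real) \<Rightarrow> (nat \<Rightarrow> 'a option \<Rightarrow> 'b option \<Rightarrow> real) \<Rightarrow> real" where
  "ckdg_err S P C1 C2 u M =
     (\<Sum>s\<in>S. P s * (if u 1 s \<le> u 2 s then \<bar>u 1 s - u 2 s\<bar> * ckdg_w C1 C2 M 1 s
                     else \<bar>u 1 s - u 2 s\<bar> * ckdg_w C1 C2 M 2 s))"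

definition is_ckddg ::
  "'a set \<Rightarrow> 's set \<Rightarrow> ('s \<Rightarrow> real) \<Rightarrow> ('s \<Rightarrow> 'a set) \<Rightarrow> ('s \<Rightarrow> 'a set) \<Rightarrow> bool" where
  "is_ckddg A S P Cw Cl \<longleftrightarrow>
     finite A \<and> finite S \<and> is_pmf_on S P \<and> (\<forall>s\<in>S. Cw s \<subseteq> A \<and> Cl s \<subseteq> A)"

text \<open>The induced CKDG (A, A, {1,2} \<times> S, P', C1', C2', u').\<close>
definition ind_S :: "'s set \<Rightarrow> (nat \<times> 's) set" where
  "ind_S S = {1,2} \<times> S"
definition ind_P :: "('s \<Rightarrow> real) \<Rightarrow> nat \<times> 's \<Rightarrow> real" where
  "ind_P P = (\<lambda>(i,s). P s / 2)"
definition ind_C :: "('s \<Rightarrow> 'a set) \<Rightarrow> ('s \<Rightarrow> 'a set) \<Rightarrow> nat \<Rightarrow> nat \<times> 's \<Rightarrow> 'a set" where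
  "ind_C Cw Cl j = (\<lambda>(i,s). if i = j then Cw s else Cl s)"
definition ind_u :: "nat \<Rightarrow> nat \<times> 's \<Rightarrow> real" where
  "ind_u j = (\<lambda>(i,s). if i = j then 1 else 0)"

definition ckddg_err ::
  "'s set \<Rightarrow> ('s \<Rightarrow> real) \<Rightarrow> ('s \<Rightarrow> 'a set) \<Rightarrow> ('s \<Rightarrow> 'a set)
   \<Rightarrow> (nat \<Rightarrow> 'a option \<Rightarrow> 'a option \<Rightarrow> real) \<Rightarrow> real" where
  "ckddg_err S P Cw Cl M =
     ckdg_err (ind_S S) (ind_P P) (ind_C Cw Cl 1) (ind_C Cw Cl 2) ind_u M"

definition is_piddg ::
  "'a set \<Rightarrow> 's set \<Rightarrow> ('s \<Rightarrow> real) \<Rightarrow> ('s \<Rightarrow> 'a set) \<Rightarrow> ('s \<Rightarrow> 'a set) \<Rightarrow> bool" where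
  "is_piddg A S P Cw Cl \<longleftrightarrow>
     finite A \<and> finite S \<and> is_pmf_on S P \<and> (\<forall>s\<in>S. Cw s \<subseteq> A \<and> Cl s \<subseteq> A)"

definition available :: "'a set \<Rightarrow> 'a option \<Rightarrow> bool" where
  "available T a \<longleftrightarrow> a \<in> ext_actions T"

definition bg_payoff ::
  "(nat \<Rightarrow> 'a option \<Rightarrow> 'a option \<Rightarrow> real) \<Rightarrow> nat \<Rightarrow> 'a set \<Rightarrow> 'a set
   \<Rightarrow> 'a option \<Rightarrow> 'a option \<Rightarrow> real" where
  "bg_payoff M i T1 T2 a1 a2 =
     (let own = (if i = 1 then available T1 a1 else available T2 a2);
          oth = (if i = 1 then available T2 a2 else available T1 a1)
      in if own \<and> oth then M i a1 a2
         else if \<not> own \<and> oth then 0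
         else if own \<and> \<not> oth then 1
         else 1 / 2)"

definition bg_strategies :: "'a set \<Rightarrow> 'a set set \<Rightarrow> ('a set \<Rightarrow> 'a option \<Rightarrow> real) set" where
  "bg_strategies A Ts = {\<sigma>. \<forall>T\<in>Ts. \<sigma> T \<in> mixed (ext_actions A)}"

definition bg_expected ::
  "'a set \<Rightarrow> 's set \<Rightarrow> ('s \<Rightarrow> real) \<Rightarrow> ('s \<Rightarrow> 'a set) \<Rightarrow> ('s \<Rightarrow> 'a set)
   \<Rightarrow> (nat \<Rightarrow> 'a option \<Rightarrow> 'a option \<Rightarrow> real) \<Rightarrow> nat
   \<Rightarrow> ('a set \<Rightarrow> 'a option \<Rightarrow> real) \<Rightarrow> ('a set \<Rightarrow> 'a option \<Rightarrow> real) \<Rightarrow> real" where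
  "bg_expected A S P T1 T2 M i \<sigma>1 \<sigma>2 =
     (\<Sum>s\<in>S. P s * (\<Sum>a1\<in>ext_actions A. \<Sum>a2\<in>ext_actions A.
        \<sigma>1 (T1 s) a1 * \<sigma>2 (T2 s) a2 * bg_payoff M i (T1 s) (T2 s) a1 a2))"

definition bg_value ::
  "'a set \<Rightarrow> 's set \<Rightarrow> ('s \<Rightarrow> real) \<Rightarrow> ('s \<Rightarrow> 'a set) \<Rightarrow> ('s \<Rightarrow> 'a set)
   \<Rightarrow> (nat \<Rightarrow> 'a option \<Rightarrow> 'a option \<Rightarrow> real) \<Rightarrow> nat \<Rightarrow> real" where
  "bg_value A S P T1 T2 M i =
     (if i = 1 then
        (SUP \<sigma>1 \<in> bg_strategies A (T1 ` S). INF \<sigma>2 \<in> bg_strategies A (T2 ` S).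
           bg_expected A S P T1 T2 M 1 \<sigma>1 \<sigma>2)
      else
        (SUP \<sigma>2 \<in> bg_strategies A (T2 ` S). INF \<sigma>1 \<in> bg_strategies A (T1 ` S).
           bg_expected A S P T1 T2 M 2 \<sigma>1 \<sigma>2))"

text \<open>G_1(B,M): agent 1 has type Cw s, agent 2 has type Cl s; G_2(B,M) swaps the types.
  Error = (v_1(G_2) + v_2(G_1)) / 2.\<close>
definition piddg_err ::
  "'a set \<Rightarrow> 's set \<Rightarrow> ('s \<Rightarrow> real) \<Rightarrow> ('s \<Rightarrow> 'a set) \<Rightarrow> ('s \<Rightarrow> 'a set)
   \<Rightarrow> (nat \<Rightarrow> 'a option \<Rightarrow> 'a option \<Rightarrow> real) \<Rightarrow> real" where
  "piddg_err A S P Cw Cl M =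
     (bg_value A S P Cl Cw M 1 + bg_value A S P Cw Cl M 2) / 2"

end

(* In a two-action example with three scenarios, a judge that flips a fair coin in some
   situations has error at most 29/60: in every scenario an explicit mixed strategy of the
   honest debater caps the liar's chance of winning.  Against a deterministic judge every
   scenario game has 0/1 payoffs, and a case analysis on a few entries of the judge, using only
   pure strategies and fifty-fifty mixtures of two actions for the liar, shows that the error
   is at least 1/2.  Both kinds of debater can read the scenario off their own type, so the
   same honest strategies work in the private-information game, while the liar there can play
   an almost optimal strategy of each scenario game; hence its error lies between the same
   bounds.  The common knowledge debate game is the distinguishing game's induced game,
   reindexed by nat. *)

theory Submission
  imports Defs "HOL-Library.Nat_Bijection"
begin

section \<open>Zero-sum matrix games\<close>

lemma mixed_sum_ge:
  assumes "p \<in> mixed R" "\<forall>x\<in>R. a \<le> h x"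
  shows "a \<le> (\<Sum>x\<in>R. p x * h x)"
proof -
  have "a = (\<Sum>x\<in>R. p x * a)"
    using assms(1) by (simp add: mixed_def sum_distrib_right[symmetric])
  also have "\<dots> \<le> (\<Sum>x\<in>R. p x * h x)"
    using assms by (intro sum_mono mult_left_mono) (auto simp: mixed_def)
  finally show ?thesis .
qed

lemma mixed_sum_le:
  assumes "p \<in> mixed R" "\<forall>x\<in>R. h x \<le> a"
  shows "(\<Sum>x\<in>R. p x * h x) \<le> a"
proof -
  have "(\<Sum>x\<in>R. p x * h x) \<le> (\<Sum>x\<in>R. p x * a)"
    using assms by (intro sum_mono mult_left_mono) (auto simp: mixed_def)
  also have "\<dots> = a"
    using assms(1) by (simp add: mixed_def sum_distrib_right[symmetric])
  finally show ?thesis .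
qed

lemma mixed_expectation_ge:
  assumes "p \<in> mixed R" "q \<in> mixed C" "\<forall>y\<in>C. c \<le> (\<Sum>x\<in>R. p x * g x y)"
  shows "c \<le> (\<Sum>x\<in>R. \<Sum>y\<in>C. p x * q y * g x y)"
proof -
  have "(\<Sum>x\<in>R. \<Sum>y\<in>C. p x * q y * g x y) = (\<Sum>y\<in>C. q y * (\<Sum>x\<in>R. p x * g x y))"
    by (subst sum.swap) (simp add: sum_distrib_left mult.assoc mult.left_commute)
  with assms show ?thesis
    by (simp add: mixed_sum_ge)
qed

lemma mixed_expectation_le:
  assumes "p \<in> mixed R" "q \<in> mixed C" "\<forall>x\<in>R. (\<Sum>y\<in>C. q y * g x y) \<le> c"
  shows "(\<Sum>x\<in>R. \<Sum>y\<in>C. p x * q y * g x y) \<le> c"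
proof -
  have "(\<Sum>x\<in>R. \<Sum>y\<in>C. p x * q y * g x y) = (\<Sum>x\<in>R. p x * (\<Sum>y\<in>C. q y * g x y))"
    by (simp add: sum_distrib_left mult.assoc)
  with assms show ?thesis
    by (simp add: mixed_sum_le)
qed

lemma mixed_expectation_in_unit:
  assumes "p \<in> mixed R" "q \<in> mixed C" "\<forall>x\<in>R. \<forall>y\<in>C. g x y \<in> {0..1}"
  shows "(\<Sum>x\<in>R. \<Sum>y\<in>C. p x * q y * g x y) \<in> {0..1}"
  using assms
  by (auto intro!: mixed_expectation_ge mixed_expectation_le mixed_sum_ge mixed_sum_le)

lemma SUP_INF_ge:
  fixes f :: "'x \<Rightarrow> 'y \<Rightarrow> real"
  assumes "x0 \<in> X" "Y \<noteq> {}" "\<forall>x\<in>X. \<forall>y\<in>Y. f x y \<in> {lo..hi}" "\<forall>y\<in>Y. c \<le> f x0 y"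
  shows "c \<le> (SUP x\<in>X. INF y\<in>Y. f x y)"
proof -
  obtain y0 where y0: "y0 \<in> Y"
    using assms(2) by auto
  have "(INF y\<in>Y. f x y) \<le> hi" if "x \<in> X" for x
    using cINF_lower[of "f x" Y y0] that y0 assms(3) by (force intro: bdd_belowI2[where m = lo])
  then have "bdd_above ((\<lambda>x. INF y\<in>Y. f x y) ` X)"
    by (rule bdd_aboveI2)
  moreover have "c \<le> (INF y\<in>Y. f x0 y)"
    using assms(2,4) by (intro cINF_greatest) auto
  ultimately show ?thesis
    using assms(1) by (auto intro: cSUP_upper2)
qed

lemma SUP_INF_le:
  fixes f :: "'x \<Rightarrow> 'y \<Rightarrow> real"
  assumes "X \<noteq> {}" "y0 \<in> Y" "\<forall>x\<in>X. \<forall>y\<in>Y. lo \<le> f x y" "\<forall>x\<in>X. f x y0 \<le> c"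
  shows "(SUP x\<in>X. INF y\<in>Y. f x y) \<le> c"
proof (rule cSUP_least[OF assms(1)])
  fix x
  assume "x \<in> X"
  then have "(INF y\<in>Y. f x y) \<le> f x y0"
    using assms(2,3) by (intro cINF_lower bdd_belowI2[where m = lo]) auto
  with \<open>x \<in> X\<close> assms(4) show "(INF y\<in>Y. f x y) \<le> c"
    by fastforce
qed

definition two_point :: "'x \<Rightarrow> 'x \<Rightarrow> 'x \<Rightarrow> real" where
  "two_point r r' x = (of_bool (x = r) + of_bool (x = r')) / 2"

lemma sum_two_point:
  assumes "finite R" "r \<in> R" "r' \<in> R"
  shows "(\<Sum>x\<in>R. two_point r r' x * h x) = (h r + h r') / 2"
proof -
  have "(\<Sum>x\<in>R. two_point r r' x * h x)
      = (\<Sum>x\<in>R. ((if x = r then h x else 0) + (if x = r' then h x else 0)) / 2)"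
    by (intro sum.cong) (simp_all add: two_point_def distrib_right)
  also have "\<dots> = ((\<Sum>x\<in>R. if x = r then h x else 0) + (\<Sum>x\<in>R. if x = r' then h x else 0)) / 2"
    by (simp only: sum_divide_distrib[symmetric] sum.distrib)
  finally show ?thesis
    using assms by simp
qed

lemma two_point_mixed:
  assumes "finite R" "r \<in> R" "r' \<in> R"
  shows "two_point r r' \<in> mixed R"
  using sum_two_point[OF assms, of "\<lambda>_. 1"] by (simp add: mixed_def two_point_def)

definition secures :: "'x set \<Rightarrow> 'y set \<Rightarrow> ('x \<Rightarrow> 'y \<Rightarrow> real) \<Rightarrow> ('x \<Rightarrow> real) \<Rightarrow> real \<Rightarrow> bool" where
  "secures R C g p c \<longleftrightarrow> p \<in> mixed R \<and> (\<forall>y\<in>C. c \<le> (\<Sum>x\<in>R. p x * g x y))"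

definition caps :: "'x set \<Rightarrow> 'y set \<Rightarrow> ('x \<Rightarrow> 'y \<Rightarrow> real) \<Rightarrow> ('y \<Rightarrow> real) \<Rightarrow> real \<Rightarrow> bool" where
  "caps R C g q c \<longleftrightarrow> q \<in> mixed C \<and> (\<forall>x\<in>R. (\<Sum>y\<in>C. q y * g x y) \<le> c)"

lemma secures_two_point:
  assumes "finite R" "r \<in> R" "r' \<in> R" "\<forall>y\<in>C. c \<le> (g r y + g r' y) / 2"
  shows "secures R C g (two_point r r') c"
  using assms by (simp add: secures_def two_point_mixed sum_two_point)

lemma caps_two_point:
  assumes "finite C" "y \<in> C" "y' \<in> C" "\<forall>x\<in>R. (g x y + g x y') / 2 \<le> c"
  shows "caps R C g (two_point y y') c"
  using assms by (simp add: caps_def two_point_mixed sum_two_point)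

lemma mat_value_ge:
  assumes "finite C" "C \<noteq> {}" "\<forall>x\<in>R. \<forall>y\<in>C. g x y \<in> {0..1}" "secures R C g p c"
  shows "c \<le> mat_value R C g"
  unfolding mat_value_def
proof (rule SUP_INF_ge[where lo = 0 and hi = 1])
  show "p \<in> mixed R" "\<forall>q\<in>mixed C. c \<le> (\<Sum>x\<in>R. \<Sum>y\<in>C. p x * q y * g x y)"
    using assms(4) by (auto simp: secures_def intro: mixed_expectation_ge)
  show "mixed C \<noteq> {}"
    using assms(1,2) two_point_mixed by fast
qed (use assms(3) mixed_expectation_in_unit in blast)

lemma mat_value_le:
  assumes "finite R" "R \<noteq> {}" "\<forall>x\<in>R. \<forall>y\<in>C. g x y \<in> {0..1}" "caps R C g q c"
  shows "mat_value R C g \<le> c"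
  unfolding mat_value_def
proof (rule SUP_INF_le[where lo = 0])
  show "q \<in> mixed C" "\<forall>p\<in>mixed R. (\<Sum>x\<in>R. \<Sum>y\<in>C. p x * q y * g x y) \<le> c"
    using assms(4) by (auto simp: caps_def intro: mixed_expectation_le)
  show "mixed R \<noteq> {}"
    using assms(1,2) two_point_mixed by fast
qed (use assms(3) mixed_expectation_in_unit in fastforce)

lemma mat_value_in_unit:
  assumes "finite R" "R \<noteq> {}" "finite C" "C \<noteq> {}" "\<forall>x\<in>R. \<forall>y\<in>C. g x y \<in> {0..1}"
  shows "mat_value R C g \<in> {0..1}"
proof -
  obtain r y where "r \<in> R" "y \<in> C"
    using assms(2,4) by blast
  then have "secures R C g (two_point r r) 0" "caps R C g (two_point y y) 1"
    using assms by (auto intro!: secures_two_point caps_two_point)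
  then show ?thesis
    using assms mat_value_ge[of C R g] mat_value_le[of R C g] by simp
qed

lemma mat_value_approx:
  assumes "finite R" "R \<noteq> {}" "finite C" "C \<noteq> {}" "\<forall>x\<in>R. \<forall>y\<in>C. g x y \<in> {0..1}" "0 < e"
  shows "\<exists>p. secures R C g p (mat_value R C g - e)"
proof -
  let ?E = "\<lambda>p q. \<Sum>x\<in>R. \<Sum>y\<in>C. p x * q y * g x y"
  obtain y0 where y0: "y0 \<in> C"
    using assms(4) by blast
  have bounds: "?E p q \<in> {0..1}" if "p \<in> mixed R" "q \<in> mixed C" for p q
    using that assms(5) by (rule mixed_expectation_in_unit)
  have pure: "?E p (two_point y y) = (\<Sum>x\<in>R. p x * g x y)" if "y \<in> C" for p y
    using that assms(3)
    by (simp add: sum_distrib_left[symmetric] mult.assoc mult.left_commute sum_two_point)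
  have "(INF q\<in>mixed C. ?E p q) \<le> 1" if "p \<in> mixed R" for p
    using cINF_lower[of "?E p" "mixed C" "two_point y0 y0"] bounds[OF that] y0 assms(3)
    by (force intro: bdd_belowI2[where m = 0] two_point_mixed)
  then have "bdd_above ((\<lambda>p. INF q\<in>mixed C. ?E p q) ` mixed R)"
    by (rule bdd_aboveI2)
  moreover have "mixed R \<noteq> {}"
    using assms(1,2) two_point_mixed by fast
  moreover have "mat_value R C g - e < mat_value R C g"
    using assms(6) by simp
  ultimately obtain p where p: "p \<in> mixed R" "mat_value R C g - e < (INF q\<in>mixed C. ?E p q)"
    unfolding mat_value_def by (auto simp: less_cSUP_iff)
  have "mat_value R C g - e \<le> (\<Sum>x\<in>R. p x * g x y)" if "y \<in> C" for y
  proof -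
    have "(INF q\<in>mixed C. ?E p q) \<le> ?E p (two_point y y)"
      using that assms(3) bounds[OF p(1)]
      by (force intro: cINF_lower bdd_belowI2[where m = 0] two_point_mixed)
    with p(2) pure[OF that] show ?thesis
      by simp
  qed
  with p(1) show ?thesis
    unfolding secures_def by blast
qed

section \<open>Bayesian games\<close>

lemma ext_actions_empty [simp]: "ext_actions {} = {None}"
  by (simp add: ext_actions_def)

lemma ext_actions_insert [simp]: "ext_actions (insert a A) = insert (Some a) (ext_actions A)"
  by (auto simp: ext_actions_def)

lemma ext_actions_nonempty [simp]: "ext_actions A \<noteq> {}"
  by (simp add: ext_actions_def)

lemma finite_ext_actions [simp]: "finite (ext_actions A) \<longleftrightarrow> finite A"
  by (simp add: ext_actions_def finite_image_iff)

lemma ext_actions_mono: "A \<subseteq> B \<Longrightarrow> ext_actions A \<subseteq> ext_actions B"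
  by (auto simp: ext_actions_def)

lemma subgame_finite_in_unit:
  assumes "finite A" "T1 \<subseteq> A" "T2 \<subseteq> A" "\<forall>x\<in>ext_actions A. \<forall>y\<in>ext_actions A. g x y \<in> {0..1}"
  shows "finite (ext_actions T1)" "finite (ext_actions T2)"
    "\<forall>x\<in>ext_actions T1. \<forall>y\<in>ext_actions T2. g x y \<in> {0..1}"
proof -
  show "finite (ext_actions T1)" "finite (ext_actions T2)"
    using assms(1-3) by (simp_all add: finite_subset)
  show "\<forall>x\<in>ext_actions T1. \<forall>y\<in>ext_actions T2. g x y \<in> {0..1}"
    using assms(4) ext_actions_mono[OF assms(2)] ext_actions_mono[OF assms(3)] by blast
qed

lemma bg_payoff_in_unit:
  assumes "T1 \<subseteq> A" "T2 \<subseteq> A" "\<forall>x\<in>ext_actions A. \<forall>y\<in>ext_actions A. M 1 x y \<in> {0..1}"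
  shows "bg_payoff M 1 T1 T2 a1 a2 \<in> {0..1}"
proof -
  have "ext_actions T1 \<subseteq> ext_actions A" "ext_actions T2 \<subseteq> ext_actions A"
    using assms(1,2) by (auto simp: ext_actions_def)
  with assms(3) show ?thesis
    by (auto simp: bg_payoff_def Let_def available_def)
qed

lemma bg_expected_in_unit:
  assumes "is_pmf_on S P" "\<forall>s\<in>S. T1 s \<subseteq> A \<and> T2 s \<subseteq> A"
    "\<forall>x\<in>ext_actions A. \<forall>y\<in>ext_actions A. M 1 x y \<in> {0..1}"
    "\<sigma>1 \<in> bg_strategies A (T1 ` S)" "\<sigma>2 \<in> bg_strategies A (T2 ` S)"
  shows "bg_expected A S P T1 T2 M 1 \<sigma>1 \<sigma>2 \<in> {0..1}"
proof -
  let ?E = "\<lambda>s. \<Sum>a1\<in>ext_actions A. \<Sum>a2\<in>ext_actions A.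
    \<sigma>1 (T1 s) a1 * \<sigma>2 (T2 s) a2 * bg_payoff M 1 (T1 s) (T2 s) a1 a2"
  have E: "?E s \<in> {0..1}" if "s \<in> S" for s
    using assms that bg_payoff_in_unit[of "T1 s" A "T2 s" M]
    by (intro mixed_expectation_in_unit) (auto simp: bg_strategies_def)
  have P: "\<forall>s\<in>S. 0 \<le> P s" "sum P S = 1"
    using assms(1) by (auto simp: is_pmf_on_def)
  have "0 \<le> (\<Sum>s\<in>S. P s * ?E s)"
    using E P by (intro sum_nonneg) auto
  moreover have "(\<Sum>s\<in>S. P s * ?E s) \<le> (\<Sum>s\<in>S. P s * 1)"
    using E P by (intro sum_mono mult_left_mono) auto
  ultimately show ?thesis
    using P by (simp add: bg_expected_def)
qed

lemma bg_strategies_nonempty: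
  assumes "finite A"
  shows "(\<lambda>_. two_point None None) \<in> bg_strategies A Ts"
  using assms by (auto simp: bg_strategies_def ext_actions_def intro: two_point_mixed)

lemma behavioural_strategy_of_mixed:
  assumes "finite A" "inj_on T S" "\<forall>s\<in>S. T s \<subseteq> A" "\<forall>s\<in>S. p s \<in> mixed (ext_actions (T s))"
  obtains \<sigma> where "\<sigma> \<in> bg_strategies A (T ` S)"
    "\<And>s h. s \<in> S \<Longrightarrow> (\<Sum>x\<in>ext_actions A. \<sigma> (T s) x * h x) = (\<Sum>x\<in>ext_actions (T s). p s x * h x)"
proof
  define \<sigma> where "\<sigma> U x = (if x \<in> ext_actions U then p (inv_into S T U) x else 0)" for U x
  have fin: "finite (ext_actions A)"
    using assms(1) by (simp add: ext_actions_def)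
  show sum: "(\<Sum>x\<in>ext_actions A. \<sigma> (T s) x * h x) = (\<Sum>x\<in>ext_actions (T s). p s x * h x)"
    if "s \<in> S" for s h
  proof -
    have "(\<Sum>x\<in>ext_actions A. \<sigma> (T s) x * h x)
        = (\<Sum>x\<in>ext_actions A. if x \<in> ext_actions (T s) then p s x * h x else 0)"
      using that assms(2) by (intro sum.cong) (simp_all add: \<sigma>_def)
    also have "\<dots> = (\<Sum>x\<in>ext_actions A \<inter> ext_actions (T s). p s x * h x)"
      using fin by (rule sum.inter_restrict[symmetric])
    also have "ext_actions A \<inter> ext_actions (T s) = ext_actions (T s)"
      using assms(3) that by (auto simp: ext_actions_def)
    finally show ?thesis .
  qed
  show "\<sigma> \<in> bg_strategies A (T ` S)"
    unfolding bg_strategies_def mixed_def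
    using sum[where h = "\<lambda>_. 1"] assms(2,4) by (auto simp: \<sigma>_def mixed_def)
qed

lemma bg_value_agent1:
  "bg_value A S P T1 T2 M 1 = (SUP \<sigma>1\<in>bg_strategies A (T1 ` S). INF \<sigma>2\<in>bg_strategies A (T2 ` S).
     bg_expected A S P T1 T2 M 1 \<sigma>1 \<sigma>2)"
  by (simp add: bg_value_def)

lemma bg_value_agent2:
  "bg_value A S P T1 T2 M 2 = (SUP \<sigma>2\<in>bg_strategies A (T2 ` S). INF \<sigma>1\<in>bg_strategies A (T1 ` S).
     bg_expected A S P T1 T2 M 2 \<sigma>1 \<sigma>2)"
  by (simp add: bg_value_def)

lemma bg_value_ge:
  assumes "finite A" "is_pmf_on S P" "\<forall>s\<in>S. T1 s \<subseteq> A \<and> T2 s \<subseteq> A" "inj_on T1 S"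
    "\<forall>x\<in>ext_actions A. \<forall>y\<in>ext_actions A. M 1 x y \<in> {0..1}"
    "\<forall>s\<in>S. secures (ext_actions (T1 s)) (ext_actions (T2 s)) (M 1) (p s) (c s) \<and> c s \<le> 1"
  shows "(\<Sum>s\<in>S. P s * c s) \<le> bg_value A S P T1 T2 M 1"
proof -
  obtain \<sigma> where \<sigma>: "\<sigma> \<in> bg_strategies A (T1 ` S)"
    and sum_\<sigma>: "\<And>s h. s \<in> S \<Longrightarrow>
      (\<Sum>x\<in>ext_actions A. \<sigma> (T1 s) x * h x) = (\<Sum>x\<in>ext_actions (T1 s). p s x * h x)"
    using behavioural_strategy_of_mixed[of A T1 S p] assms by (auto simp: secures_def)
  have response: "c s \<le> (\<Sum>a1\<in>ext_actions A. \<sigma> (T1 s) a1 * bg_payoff M 1 (T1 s) (T2 s) a1 a2)"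
    if "s \<in> S" for s a2
  proof (cases "a2 \<in> ext_actions (T2 s)")
    case True
    with assms(6) that show ?thesis
      by (simp add: sum_\<sigma> bg_payoff_def Let_def available_def secures_def)
  next
    case False
    with assms(6) that show ?thesis
      by (simp add: sum_\<sigma> bg_payoff_def Let_def available_def secures_def mixed_def)
  qed
  have guarantee: "\<forall>\<sigma>2\<in>bg_strategies A (T2 ` S).
      (\<Sum>s\<in>S. P s * c s) \<le> bg_expected A S P T1 T2 M 1 \<sigma> \<sigma>2"
    unfolding bg_expected_def using assms(2) response \<sigma>
    by (intro ballI sum_mono mult_left_mono mixed_expectation_ge)
      (auto simp: is_pmf_on_def bg_strategies_def)
  show ?thesis
    unfolding bg_value_agent1
  proof (rule SUP_INF_ge[where f = "bg_expected A S P T1 T2 M 1" and lo = 0 and hi = 1,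
        OF \<sigma> _ _ guarantee])
    show "bg_strategies A (T2 ` S) \<noteq> {}"
      using bg_strategies_nonempty[OF assms(1)] by blast
    show "\<forall>\<sigma>1\<in>bg_strategies A (T1 ` S). \<forall>\<sigma>2\<in>bg_strategies A (T2 ` S).
        bg_expected A S P T1 T2 M 1 \<sigma>1 \<sigma>2 \<in> {0..1}"
      using bg_expected_in_unit[of S P T1 A T2 M] assms(2,3,5) by blast
  qed
qed

lemma bg_value_le:
  assumes "finite A" "is_pmf_on S P" "\<forall>s\<in>S. T1 s \<subseteq> A \<and> T2 s \<subseteq> A" "inj_on T2 S"
    "\<forall>x\<in>ext_actions A. \<forall>y\<in>ext_actions A. M 1 x y \<in> {0..1}"
    "\<forall>s\<in>S. caps (ext_actions (T1 s)) (ext_actions (T2 s)) (M 1) (q s) (c s) \<and> 0 \<le> c s"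
  shows "bg_value A S P T1 T2 M 1 \<le> (\<Sum>s\<in>S. P s * c s)"
proof -
  obtain \<sigma> where \<sigma>: "\<sigma> \<in> bg_strategies A (T2 ` S)"
    and sum_\<sigma>: "\<And>s h. s \<in> S \<Longrightarrow>
      (\<Sum>y\<in>ext_actions A. \<sigma> (T2 s) y * h y) = (\<Sum>y\<in>ext_actions (T2 s). q s y * h y)"
    using behavioural_strategy_of_mixed[of A T2 S q] assms by (auto simp: caps_def)
  have response: "(\<Sum>a2\<in>ext_actions A. \<sigma> (T2 s) a2 * bg_payoff M 1 (T1 s) (T2 s) a1 a2) \<le> c s"
    if "s \<in> S" for s a1
  proof (cases "a1 \<in> ext_actions (T1 s)")
    case True
    with assms(6) that show ?thesis
      by (simp add: sum_\<sigma> bg_payoff_def Let_def available_def caps_def)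
  next
    case False
    with assms(6) that show ?thesis
      by (simp add: sum_\<sigma> bg_payoff_def Let_def available_def)
  qed
  have guarantee: "\<forall>\<sigma>1\<in>bg_strategies A (T1 ` S).
      bg_expected A S P T1 T2 M 1 \<sigma>1 \<sigma> \<le> (\<Sum>s\<in>S. P s * c s)"
    unfolding bg_expected_def using assms(2) response \<sigma>
    by (intro ballI sum_mono mult_left_mono mixed_expectation_le)
      (auto simp: is_pmf_on_def bg_strategies_def)
  show ?thesis
    unfolding bg_value_agent1
  proof (rule SUP_INF_le[where f = "bg_expected A S P T1 T2 M 1" and lo = 0, OF _ \<sigma> _ guarantee])
    show "bg_strategies A (T1 ` S) \<noteq> {}"
      using bg_strategies_nonempty[OF assms(1)] by blast
    show "\<forall>\<sigma>1\<in>bg_strategies A (T1 ` S). \<forall>\<sigma>2\<in>bg_strategies A (T2 ` S).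
        0 \<le> bg_expected A S P T1 T2 M 1 \<sigma>1 \<sigma>2"
      using bg_expected_in_unit[of S P T1 A T2 M] assms(2,3,5) by simp
  qed
qed

text \<open>The liar's type reveals the scenario, so it can play an \<open>e\<close>-optimal strategy of every
  scenario's matrix game.\<close>

lemma bg_value_ge_mat_values:
  assumes "finite A" "is_pmf_on S P" "\<forall>s\<in>S. T1 s \<subseteq> A \<and> T2 s \<subseteq> A" "inj_on T1 S"
    "\<forall>x\<in>ext_actions A. \<forall>y\<in>ext_actions A. M 1 x y \<in> {0..1}"
  shows "(\<Sum>s\<in>S. P s * mat_value (ext_actions (T1 s)) (ext_actions (T2 s)) (M 1))
    \<le> bg_value A S P T1 T2 M 1"
proof (rule field_le_epsilon)
  fix e :: real
  assume "0 < e"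
  let ?v = "\<lambda>s. mat_value (ext_actions (T1 s)) (ext_actions (T2 s)) (M 1)"
  have games: "finite (ext_actions (T1 s)) \<and> finite (ext_actions (T2 s)) \<and>
      (\<forall>x\<in>ext_actions (T1 s). \<forall>y\<in>ext_actions (T2 s). M 1 x y \<in> {0..1})" if "s \<in> S" for s
    using subgame_finite_in_unit[of A "T1 s" "T2 s" "M 1"] assms(1,3,5) that by blast
  have "\<exists>p. secures (ext_actions (T1 s)) (ext_actions (T2 s)) (M 1) p (?v s - e)" if "s \<in> S" for s
    using games[OF that] \<open>0 < e\<close> by (intro mat_value_approx) auto
  then obtain p
    where p: "\<And>s. s \<in> S \<Longrightarrow> secures (ext_actions (T1 s)) (ext_actions (T2 s)) (M 1) (p s) (?v s - e)"
    by (metis someI_ex)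
  have v: "?v s \<in> {0..1}" if "s \<in> S" for s
    using games[OF that] by (intro mat_value_in_unit) auto
  have "\<forall>s\<in>S. secures (ext_actions (T1 s)) (ext_actions (T2 s)) (M 1) (p s) (?v s - e) \<and>
      ?v s - e \<le> 1"
    using p v \<open>0 < e\<close> by fastforce
  with assms have "(\<Sum>s\<in>S. P s * (?v s - e)) \<le> bg_value A S P T1 T2 M 1"
    by (intro bg_value_ge)
  moreover have "(\<Sum>s\<in>S. P s * (?v s - e)) = (\<Sum>s\<in>S. P s * ?v s) - e"
    using assms(2)
    by (simp add: is_pmf_on_def right_diff_distrib sum_subtractf sum_distrib_right[symmetric])
  ultimately show "(\<Sum>s\<in>S. P s * ?v s) \<le> bg_value A S P T1 T2 M 1 + e"
    by linarith
qed

section \<open>Debate games\<close>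

definition swap_agents :: "(nat \<Rightarrow> 'a \<Rightarrow> 'b \<Rightarrow> real) \<Rightarrow> nat \<Rightarrow> 'b \<Rightarrow> 'a \<Rightarrow> real" where
  "swap_agents M = (\<lambda>i y x. if i = 1 then M 2 x y else M 1 x y)"

definition liar_value ::
  "('s \<Rightarrow> 'a set) \<Rightarrow> ('s \<Rightarrow> 'a set) \<Rightarrow> ('a option \<Rightarrow> 'a option \<Rightarrow> real) \<Rightarrow> 's \<Rightarrow> real" where
  "liar_value Cw Cl g s = mat_value (ext_actions (Cl s)) (ext_actions (Cw s)) g"

lemma policy_entries_in_unit:
  assumes "M \<in> policies A A" "x \<in> ext_actions A" "y \<in> ext_actions A"
  shows "M 1 x y \<in> {0..1}" "swap_agents M 1 y x \<in> {0..1}"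
  using assms by (auto simp: policies_def swap_agents_def)

lemma policy_agent2:
  assumes "M \<in> policies A1 A2" "x \<in> ext_actions A1" "y \<in> ext_actions A2"
  shows "M 2 x y = 1 - M 1 x y"
proof -
  have "M 1 x y + M 2 x y = 1"
    using assms unfolding policies_def by blast
  then show ?thesis
    by simp
qed

lemma ckddg_err_eq:
  "ckddg_err S P Cw Cl M =
     (\<Sum>s\<in>S. P s * (liar_value Cw Cl (M 1) s + liar_value Cw Cl (swap_agents M 1) s)) / 2"
proof -
  have "ckddg_err S P Cw Cl M =
      (\<Sum>s\<in>S. P s / 2 * liar_value Cw Cl (swap_agents M 1) s + P s / 2 * liar_value Cw Cl (M 1) s)"
    by (simp add: ckddg_err_def ckdg_err_def ind_S_def ind_P_def ind_C_def ind_u_def ckdg_w_def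
        liar_value_def swap_agents_def sum.cartesian_product' sum.distrib)
  then show ?thesis
    by (simp add: sum_divide_distrib add_divide_distrib distrib_left add.commute)
qed

lemma bg_payoff_swap_agents:
  "bg_payoff (swap_agents M) 1 T2 T1 a2 a1 = bg_payoff M 2 T1 T2 a1 a2"
  by (simp add: bg_payoff_def Let_def swap_agents_def)

lemma bg_expected_swap_agents:
  "bg_expected A S P T2 T1 (swap_agents M) 1 \<sigma>2 \<sigma>1 = bg_expected A S P T1 T2 M 2 \<sigma>1 \<sigma>2"
  unfolding bg_expected_def bg_payoff_swap_agents
  by (subst sum.swap) (simp only: mult.commute mult.left_commute)

lemma piddg_err_eq:
  "piddg_err A S P Cw Cl M =
     (bg_value A S P Cl Cw M 1 + bg_value A S P Cl Cw (swap_agents M) 1) / 2"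
  unfolding piddg_err_def bg_value_agent1 bg_value_agent2 bg_expected_swap_agents ..

lemma liar_value_in_unit:
  assumes "finite A" "Cl s \<subseteq> A" "Cw s \<subseteq> A" "\<forall>x\<in>ext_actions A. \<forall>y\<in>ext_actions A. g x y \<in> {0..1}"
  shows "liar_value Cw Cl g s \<in> {0..1}"
  unfolding liar_value_def using subgame_finite_in_unit[OF assms]
  by (intro mat_value_in_unit) auto

lemma liar_value_ge_two_rows:
  assumes "finite A" "Cl s \<subseteq> A" "Cw s \<subseteq> A" "\<forall>x\<in>ext_actions A. \<forall>y\<in>ext_actions A. g x y \<in> {0..1}"
    "r \<in> ext_actions (Cl s)" "r' \<in> ext_actions (Cl s)"
    "\<forall>y\<in>ext_actions (Cw s). t \<le> (g r y + g r' y) / 2"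
  shows "t \<le> liar_value Cw Cl g s"
  unfolding liar_value_def using subgame_finite_in_unit[OF assms(1-4)] assms(5-7)
  by (intro mat_value_ge[where p = "two_point r r'"] secures_two_point) auto

lemma liar_value_le:
  assumes "finite A" "Cl s \<subseteq> A" "Cw s \<subseteq> A" "\<forall>x\<in>ext_actions A. \<forall>y\<in>ext_actions A. g x y \<in> {0..1}"
    "caps (ext_actions (Cl s)) (ext_actions (Cw s)) g q c"
  shows "liar_value Cw Cl g s \<le> c"
  unfolding liar_value_def using subgame_finite_in_unit[OF assms(1-4)] assms(5)
  by (intro mat_value_le) auto

lemma ckddg_err_nonneg:
  assumes "is_ckddg A S P Cw Cl" "M \<in> policies A A"
  shows "0 \<le> ckddg_err S P Cw Cl M"
proof -
  have "0 \<le> liar_value Cw Cl (M 1) s + liar_value Cw Cl (swap_agents M 1) s" if "s \<in> S" for s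
    using assms that liar_value_in_unit[of A Cl s Cw] policy_entries_in_unit[OF assms(2)]
    by (fastforce simp: is_ckddg_def)
  with assms(1) show ?thesis
    unfolding ckddg_err_eq by (auto simp: is_ckddg_def is_pmf_on_def intro!: sum_nonneg)
qed

lemma ckddg_err_le_piddg_err:
  assumes "is_piddg A S P Cw Cl" "inj_on Cl S" "M \<in> policies A A"
  shows "ckddg_err S P Cw Cl M \<le> piddg_err A S P Cw Cl M"
proof -
  have game: "finite A" "is_pmf_on S P" "\<forall>s\<in>S. Cl s \<subseteq> A \<and> Cw s \<subseteq> A"
    using assms(1) by (auto simp: is_piddg_def)
  have "(\<Sum>s\<in>S. P s * liar_value Cw Cl g s) \<le> bg_value A S P Cl Cw N 1"
    if "g = N 1" "\<forall>x\<in>ext_actions A. \<forall>y\<in>ext_actions A. N 1 x y \<in> {0..1}" for g N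
    unfolding liar_value_def using bg_value_ge_mat_values[OF game assms(2)] that by blast
  then have "(\<Sum>s\<in>S. P s * liar_value Cw Cl (M 1) s) \<le> bg_value A S P Cl Cw M 1"
    "(\<Sum>s\<in>S. P s * liar_value Cw Cl (swap_agents M 1) s) \<le> bg_value A S P Cl Cw (swap_agents M) 1"
    using policy_entries_in_unit[OF assms(3)] by auto
  then show ?thesis
    unfolding ckddg_err_eq piddg_err_eq by (simp add: distrib_left sum.distrib)
qed

lemma errors_le_of_caps:
  assumes "is_piddg A S P Cw Cl" "inj_on Cw S" "M \<in> policies A A"
    "\<forall>s\<in>S. caps (ext_actions (Cl s)) (ext_actions (Cw s)) (M 1) (q1 s) (c1 s) \<and> 0 \<le> c1 s"
    "\<forall>s\<in>S. caps (ext_actions (Cl s)) (ext_actions (Cw s)) (swap_agents M 1) (q2 s) (c2 s) \<and>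
      0 \<le> c2 s"
  shows "ckddg_err S P Cw Cl M \<le> (\<Sum>s\<in>S. P s * (c1 s + c2 s)) / 2"
    and "piddg_err A S P Cw Cl M \<le> (\<Sum>s\<in>S. P s * (c1 s + c2 s)) / 2"
proof -
  have game: "finite A" "is_pmf_on S P" "\<forall>s\<in>S. Cl s \<subseteq> A \<and> Cw s \<subseteq> A"
    using assms(1) by (auto simp: is_piddg_def)
  have entries: "\<forall>x\<in>ext_actions A. \<forall>y\<in>ext_actions A.
      M 1 x y \<in> {0..1} \<and> swap_agents M 1 x y \<in> {0..1}"
    using policy_entries_in_unit[OF assms(3)] by blast
  have "liar_value Cw Cl (M 1) s + liar_value Cw Cl (swap_agents M 1) s \<le> c1 s + c2 s"
    if "s \<in> S" for s
    using that assms(4,5) game entries by (intro add_mono liar_value_le[where A = A]) auto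
  with game(2) show "ckddg_err S P Cw Cl M \<le> (\<Sum>s\<in>S. P s * (c1 s + c2 s)) / 2"
    unfolding ckddg_err_eq is_pmf_on_def by (intro divide_right_mono sum_mono mult_left_mono) auto
  have "bg_value A S P Cl Cw M 1 \<le> (\<Sum>s\<in>S. P s * c1 s)"
    using assms(2,4) game entries by (intro bg_value_le) auto
  moreover have "bg_value A S P Cl Cw (swap_agents M) 1 \<le> (\<Sum>s\<in>S. P s * c2 s)"
    using assms(2,5) game entries by (intro bg_value_le) auto
  ultimately show "piddg_err A S P Cw Cl M \<le> (\<Sum>s\<in>S. P s * (c1 s + c2 s)) / 2"
    unfolding piddg_err_eq by (simp add: distrib_left sum.distrib)
qed

definition policy_of :: "'a set \<Rightarrow> 'b set \<Rightarrow> ('a option \<Rightarrow> 'b option \<Rightarrow> real)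
    \<Rightarrow> nat \<Rightarrow> 'a option \<Rightarrow> 'b option \<Rightarrow> real" where
  "policy_of A1 A2 f i x y =
     (if x \<in> ext_actions A1 \<and> y \<in> ext_actions A2
      then (if i = 1 then f x y else if i = 2 then 1 - f x y else 0) else 0)"

lemma policy_of_in_policies:
  assumes "\<forall>x y. f x y \<in> {0..1}"
  shows "policy_of A1 A2 f \<in> policies A1 A2"
  using assms by (auto simp: policies_def policy_of_def)

lemma det_policies_nonempty: "policy_of A1 A2 (\<lambda>_ _. 1) \<in> det_policies A1 A2"
  by (auto simp: det_policies_def policies_def policy_of_def)

lemma INF_policies_less_INF_det_policies:
  fixes E :: "(nat \<Rightarrow> 'a option \<Rightarrow> 'b option \<Rightarrow> real) \<Rightarrow> real"
  assumes "M0 \<in> policies A1 A2" "E M0 < c" "\<forall>M\<in>policies A1 A2. 0 \<le> E M"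
    "\<forall>M\<in>det_policies A1 A2. c \<le> E M"
  shows "(INF M\<in>policies A1 A2. E M) < (INF M\<in>det_policies A1 A2. E M)"
proof -
  have "(INF M\<in>policies A1 A2. E M) \<le> E M0"
    using assms(1,3) by (intro cINF_lower bdd_belowI2[where m = 0]) auto
  also have "\<dots> < c"
    by (fact assms(2))
  also have "c \<le> (INF M\<in>det_policies A1 A2. E M)"
    using assms(4) det_policies_nonempty by (intro cINF_greatest) auto
  finally show ?thesis .
qed

lemma ckdg_of_ckddg:
  fixes S :: "nat set"
  assumes "is_ckddg A S P Cw Cl"
  obtains S' :: "nat set" and P' C1 C2 u
  where "is_ckdg A A S' P' C1 C2 u" "\<And>M. ckdg_err S' P' C1 C2 u M = ckddg_err S P Cw Cl M"
proof
  let ?S' = "prod_encode ` ind_S S"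
  let ?P' = "ind_P P \<circ> prod_decode"
  let ?C = "\<lambda>j. ind_C Cw Cl j \<circ> prod_decode"
  let ?u = "\<lambda>j. ind_u j \<circ> prod_decode"
  show "ckdg_err ?S' ?P' (?C 1) (?C 2) ?u M = ckddg_err S P Cw Cl M" for M
    unfolding ckddg_err_def ckdg_err_def ckdg_w_def
    by (simp add: sum.reindex inj_prod_encode cong: if_cong)
  have "finite S" "\<forall>s\<in>S. 0 \<le> P s" "sum P S = 1" "\<forall>s\<in>S. Cw s \<subseteq> A \<and> Cl s \<subseteq> A" "finite A"
    using assms by (auto simp: is_ckddg_def is_pmf_on_def)
  then show "is_ckdg A A ?S' ?P' (?C 1) (?C 2) ?u"
    by (auto simp: is_ckdg_def is_pmf_on_def ind_S_def ind_P_def ind_C_def sum.reindex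
        inj_prod_encode sum.cartesian_product' sum_divide_distrib[symmetric])
qed

section \<open>The example\<close>

definition ex_A :: "nat set" where
  "ex_A = {1, 2}"

definition ex_S :: "nat set" where
  "ex_S = {0, 1, 2}"

definition ex_P :: "nat \<Rightarrow> real" where
  "ex_P s = (if s = 1 then 1 / 5 else 2 / 5)"

definition ex_Cw :: "nat \<Rightarrow> nat set" where
  "ex_Cw s = (if s = 0 then {} else if s = 1 then {1} else {1, 2})"

definition ex_Cl :: "nat \<Rightarrow> nat set" where
  "ex_Cl s = (if s = 0 then {1, 2} else if s = 1 then {2} else {1})"

lemma ex_is_piddg: "is_piddg ex_A ex_S ex_P ex_Cw ex_Cl"
  by (simp add: is_piddg_def is_pmf_on_def ex_A_def ex_S_def ex_P_def ex_Cw_def ex_Cl_def)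

lemma ex_is_ckddg: "is_ckddg ex_A ex_S ex_P ex_Cw ex_Cl"
  using ex_is_piddg by (simp add: is_piddg_def is_ckddg_def)

lemma ex_types_inj: "inj_on ex_Cw ex_S" "inj_on ex_Cl ex_S"
  by (auto simp: inj_on_def ex_S_def ex_Cw_def ex_Cl_def)

definition ex_liar_value1 :: "(nat \<Rightarrow> nat option \<Rightarrow> nat option \<Rightarrow> real) \<Rightarrow> nat \<Rightarrow> real" where
  "ex_liar_value1 M = liar_value ex_Cw ex_Cl (M 1)"

definition ex_liar_value2 :: "(nat \<Rightarrow> nat option \<Rightarrow> nat option \<Rightarrow> real) \<Rightarrow> nat \<Rightarrow> real" where
  "ex_liar_value2 M = liar_value ex_Cw ex_Cl (swap_agents M 1)"

lemma ex_ckddg_err_eq: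
  "ckddg_err ex_S ex_P ex_Cw ex_Cl M =
     (2 * (ex_liar_value1 M 0 + ex_liar_value2 M 0) + (ex_liar_value1 M 1 + ex_liar_value2 M 1)
      + 2 * (ex_liar_value1 M 2 + ex_liar_value2 M 2)) / 10"
  by (simp add: ckddg_err_eq ex_liar_value1_def ex_liar_value2_def ex_S_def ex_P_def field_simps)

definition ex_judge :: "nat option \<Rightarrow> nat option \<Rightarrow> real" where
  "ex_judge x y =
     (if x = Some 2 \<and> y = Some 1 then 1 else if x = Some 1 \<and> y \<noteq> Some 1 then 1 / 2 else 0)"

definition ex_policy :: "nat \<Rightarrow> nat option \<Rightarrow> nat option \<Rightarrow> real" where
  "ex_policy = policy_of ex_A ex_A ex_judge"

lemma ex_policy_in_policies: "ex_policy \<in> policies ex_A ex_A"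
  unfolding ex_policy_def by (rule policy_of_in_policies) (simp add: ex_judge_def)

definition ex_honest1 :: "nat \<Rightarrow> nat option \<Rightarrow> real" where
  "ex_honest1 s = (if s = 2 then two_point (Some 1) (Some 1) else two_point None None)"

text \<open>The weights 2/3 and 1/3 make the liar indifferent between its two actions in scenario 2.\<close>

definition ex_honest2 :: "nat \<Rightarrow> nat option \<Rightarrow> real" where
  "ex_honest2 s =
     (if s = 0 then two_point None None else if s = 1 then two_point (Some 1) (Some 1)
      else (\<lambda>x. if x = Some 1 then 2 / 3 else if x = Some 2 then 1 / 3 else 0))"

definition ex_cap1 :: "nat \<Rightarrow> real" where
  "ex_cap1 s = (if s = 0 then 1 / 2 else 0)"

definition ex_cap2 :: "nat \<Rightarrow> real" where
  "ex_cap2 s = (if s = 0 then 1 else if s = 1 then 1 / 2 else 2 / 3)"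

lemma ex_honest1_caps:
  "\<forall>s\<in>ex_S. caps (ext_actions (ex_Cl s)) (ext_actions (ex_Cw s)) (ex_policy 1) (ex_honest1 s)
    (ex_cap1 s) \<and> 0 \<le> ex_cap1 s"
  by (auto simp: ex_S_def ex_Cl_def ex_Cw_def ex_A_def ex_honest1_def ex_cap1_def ex_policy_def
      policy_of_def ex_judge_def caps_def mixed_def two_point_def)

lemma ex_honest2_caps:
  "\<forall>s\<in>ex_S. caps (ext_actions (ex_Cl s)) (ext_actions (ex_Cw s)) (swap_agents ex_policy 1)
    (ex_honest2 s) (ex_cap2 s) \<and> 0 \<le> ex_cap2 s"
  by (auto simp: ex_S_def ex_Cl_def ex_Cw_def ex_A_def ex_honest2_def ex_cap2_def ex_policy_def
      policy_of_def ex_judge_def caps_def mixed_def two_point_def swap_agents_def)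

lemma ex_policy_err_le:
  "ckddg_err ex_S ex_P ex_Cw ex_Cl ex_policy \<le> 29 / 60"
  "piddg_err ex_A ex_S ex_P ex_Cw ex_Cl ex_policy \<le> 29 / 60"
proof -
  have "(\<Sum>s\<in>ex_S. ex_P s * (ex_cap1 s + ex_cap2 s)) / 2 = 29 / 60"
    by (simp add: ex_S_def ex_P_def ex_cap1_def ex_cap2_def)
  with errors_le_of_caps[OF ex_is_piddg ex_types_inj(1) ex_policy_in_policies
      ex_honest1_caps ex_honest2_caps]
  show "ckddg_err ex_S ex_P ex_Cw ex_Cl ex_policy \<le> 29 / 60"
    "piddg_err ex_A ex_S ex_P ex_Cw ex_Cl ex_policy \<le> 29 / 60"
    by simp_all
qed

lemma ex_liar_value1_ge:
  assumes "M \<in> policies ex_A ex_A" "s \<in> ex_S"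
    "r \<in> ext_actions (ex_Cl s)" "r' \<in> ext_actions (ex_Cl s)"
    "\<forall>y\<in>ext_actions (ex_Cw s). t \<le> (M 1 r y + M 1 r' y) / 2"
  shows "t \<le> ex_liar_value1 M s"
  unfolding ex_liar_value1_def using ex_is_piddg assms policy_entries_in_unit(1)[OF assms(1)]
  by (intro liar_value_ge_two_rows[where A = ex_A and r = r and r' = r']) (auto simp: is_piddg_def)

lemma ex_liar_value2_ge:
  assumes "M \<in> policies ex_A ex_A" "s \<in> ex_S"
    "r \<in> ext_actions (ex_Cl s)" "r' \<in> ext_actions (ex_Cl s)"
    "\<forall>x\<in>ext_actions (ex_Cw s). t \<le> 1 - (M 1 x r + M 1 x r') / 2"
  shows "t \<le> ex_liar_value2 M s"
proof -
  have sub: "ext_actions (ex_Cl s) \<subseteq> ext_actions ex_A" "ext_actions (ex_Cw s) \<subseteq> ext_actions ex_A"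
    using assms(2) by (auto simp: ex_S_def ex_Cl_def ex_Cw_def ex_A_def)
  have "t \<le> (M 2 x r + M 2 x r') / 2" if "x \<in> ext_actions (ex_Cw s)" for x
  proof -
    have "M 2 x r = 1 - M 1 x r" "M 2 x r' = 1 - M 1 x r'"
      using policy_agent2[OF assms(1)] sub that assms(3,4) by blast+
    moreover have "t \<le> 1 - (M 1 x r + M 1 x r') / 2"
      using assms(5) that by blast
    ultimately show ?thesis
      by (simp add: field_simps)
  qed
  then show ?thesis
    unfolding ex_liar_value2_def using ex_is_piddg assms(1-4) policy_entries_in_unit(2)[OF assms(1)]
    by (intro liar_value_ge_two_rows[where A = ex_A and r = r and r' = r'])
      (auto simp: is_piddg_def swap_agents_def)
qed

lemma ex_liar_values_nonneg:
  assumes "M \<in> policies ex_A ex_A" "s \<in> ex_S"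
  shows "0 \<le> ex_liar_value1 M s" "0 \<le> ex_liar_value2 M s"
  using ex_is_piddg assms policy_entries_in_unit[OF assms(1)]
    liar_value_in_unit[of ex_A ex_Cl s ex_Cw "M 1"]
    liar_value_in_unit[of ex_A ex_Cl s ex_Cw "swap_agents M 1"]
  by (auto simp: is_piddg_def ex_liar_value1_def ex_liar_value2_def)

lemma ex_det_scenarios_1_2_ge:
  assumes "M \<in> det_policies ex_A ex_A"
  shows "1 \<le> (ex_liar_value1 M 1 + ex_liar_value2 M 1)
    + 2 * (ex_liar_value1 M 2 + ex_liar_value2 M 2)"
proof -
  have M: "M \<in> policies ex_A ex_A" and m: "\<And>x y. M 1 x y = 0 \<or> M 1 x y = 1"
    using assms by (auto simp: det_policies_def)
  have "1 \<in> ex_S" "2 \<in> ex_S"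
    by (simp_all add: ex_S_def)
  note nonneg = ex_liar_values_nonneg[OF M this(1)] ex_liar_values_nonneg[OF M this(2)]
  consider (v2) "\<forall>y\<in>{None, Some 1, Some 2}. 1 \<le> M 1 None y + M 1 (Some 1) y"
    | (w2) "\<forall>x\<in>{None, Some 1, Some 2}. M 1 x None + M 1 x (Some 1) \<le> 1"
    | (clash) x y where "x \<in> {None, Some 1, Some 2}" "M 1 x None = 1" "M 1 x (Some 1) = 1"
      "y \<in> {None, Some 1, Some 2}" "M 1 None y = 0" "M 1 (Some 1) y = 0"
    using m by (metis add_0 add.commute order_refl one_add_one le_add_same_cancel1 zero_le_one)
  then show ?thesis
  proof cases
    case v2
    then have "1 / 2 \<le> ex_liar_value1 M 2"
      by (intro ex_liar_value1_ge[OF M, where r = None and r' = "Some 1"])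
        (auto simp: ex_S_def ex_Cl_def ex_Cw_def)
    with nonneg show ?thesis
      by simp
  next
    case w2
    then have "1 / 2 \<le> ex_liar_value2 M 2"
      by (intro ex_liar_value2_ge[OF M, where r = None and r' = "Some 1"])
        (auto simp: ex_S_def ex_Cl_def ex_Cw_def)
    with nonneg show ?thesis
      by simp
  next
    case clash
    text \<open>The 0 and the 1 cannot share a cell, so one of them lies in the column or row of
      action 2, which makes the corresponding scenario-1 game a sure win for the liar.\<close>
    have "y = Some 2 \<or> x = Some 2"
      using clash by auto
    then have "1 \<le> ex_liar_value2 M 1 \<or> 1 \<le> ex_liar_value1 M 1"
    proof
      assume "y = Some 2"
      with clash show ?thesis
        by (intro disjI1 ex_liar_value2_ge[OF M, where r = "Some 2" and r' = "Some 2"])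
          (auto simp: ex_S_def ex_Cl_def ex_Cw_def)
    next
      assume "x = Some 2"
      with clash show ?thesis
        by (intro disjI2 ex_liar_value1_ge[OF M, where r = "Some 2" and r' = "Some 2"])
          (auto simp: ex_S_def ex_Cl_def ex_Cw_def)
    qed
    with nonneg show ?thesis
      by auto
  qed
qed

lemma ex_ckddg_err_det_ge:
  assumes "M \<in> det_policies ex_A ex_A"
  shows "1 / 2 \<le> ckddg_err ex_S ex_P ex_Cw ex_Cl M"
proof -
  have M: "M \<in> policies ex_A ex_A" and m: "\<And>x y. M 1 x y = 0 \<or> M 1 x y = 1"
    using assms by (auto simp: det_policies_def)
  have S: "0 \<in> ex_S" "1 \<in> ex_S" "2 \<in> ex_S"
    by (simp_all add: ex_S_def)
  note nonneg = ex_liar_values_nonneg[OF M S(1)] ex_liar_values_nonneg[OF M S(2)]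
    ex_liar_values_nonneg[OF M S(3)]
  note rest = ex_det_scenarios_1_2_ge[OF assms]
  have "5 \<le> 2 * (ex_liar_value1 M 0 + ex_liar_value2 M 0)
      + (ex_liar_value1 M 1 + ex_liar_value2 M 1) + 2 * (ex_liar_value1 M 2 + ex_liar_value2 M 2)"
  proof (cases "M 1 None None = 0")
    case True
    then have w0: "1 \<le> ex_liar_value2 M 0"
      by (intro ex_liar_value2_ge[OF M S(1), where r = None and r' = None])
        (auto simp: ex_Cl_def ex_Cw_def)
    show ?thesis
    proof (cases "M 1 (Some 1) None = 1 \<or> M 1 (Some 2) None = 1")
      case True
      then obtain r where "r \<in> {Some 1, Some 2}" "M 1 r None = 1"
        by blast
      then have "1 \<le> ex_liar_value1 M 0"
        by (intro ex_liar_value1_ge[OF M S(1), where r = r and r' = r])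
          (auto simp: ex_Cl_def ex_Cw_def)
      with w0 rest nonneg show ?thesis
        by simp
    next
      case False
      with m have "M 1 (Some 1) None = 0" "M 1 (Some 2) None = 0"
        by metis+
      with True have "1 \<le> ex_liar_value2 M 1" "1 \<le> ex_liar_value2 M 2"
        by (intro ex_liar_value2_ge[OF M S(2), where r = None and r' = None]
            ex_liar_value2_ge[OF M S(3), where r = None and r' = None];
          auto simp: ex_Cl_def ex_Cw_def)+
      with w0 nonneg show ?thesis
        by simp
    qed
  next
    case False
    with m have "M 1 None None = 1"
      by metis
    then have v0: "1 \<le> ex_liar_value1 M 0"
      by (intro ex_liar_value1_ge[OF M S(1), where r = None and r' = None])
        (auto simp: ex_Cl_def ex_Cw_def)
    show ?thesis
    proof (cases "M 1 None (Some 1) = 0 \<or> M 1 None (Some 2) = 0")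
      case True
      then obtain r where "r \<in> {Some 1, Some 2}" "M 1 None r = 0"
        by blast
      then have "1 \<le> ex_liar_value2 M 0"
        by (intro ex_liar_value2_ge[OF M S(1), where r = r and r' = r])
          (auto simp: ex_Cl_def ex_Cw_def)
      with v0 rest nonneg show ?thesis
        by simp
    next
      case False
      with m have "M 1 None (Some 1) = 1" "M 1 None (Some 2) = 1"
        by metis+
      with \<open>M 1 None None = 1\<close> have "1 \<le> ex_liar_value1 M 1" "1 \<le> ex_liar_value1 M 2"
        by (intro ex_liar_value1_ge[OF M S(2), where r = None and r' = None]
            ex_liar_value1_ge[OF M S(3), where r = None and r' = None];
          auto simp: ex_Cl_def ex_Cw_def)+
      with v0 nonneg show ?thesis
        by simp
    qed
  qed
  then show ?thesis
    unfolding ex_ckddg_err_eq by simp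
qed

lemma ex_piddg_err_det_ge:
  assumes "M \<in> det_policies ex_A ex_A"
  shows "1 / 2 \<le> piddg_err ex_A ex_S ex_P ex_Cw ex_Cl M"
  using ex_ckddg_err_det_ge[OF assms] ckddg_err_le_piddg_err[OF ex_is_piddg ex_types_inj(2)] assms
  by (force simp: det_policies_def)

lemma ex_ckddg_gap:
  "(INF M\<in>policies ex_A ex_A. ckddg_err ex_S ex_P ex_Cw ex_Cl M)
     < (INF M\<in>det_policies ex_A ex_A. ckddg_err ex_S ex_P ex_Cw ex_Cl M)"
  using ex_policy_in_policies ex_policy_err_le(1) ckddg_err_nonneg[OF ex_is_ckddg]
    ex_ckddg_err_det_ge
  by (intro INF_policies_less_INF_det_policies[where c = "1 / 2"]) auto

lemma ex_piddg_gap: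
  "(INF M\<in>policies ex_A ex_A. piddg_err ex_A ex_S ex_P ex_Cw ex_Cl M)
     < (INF M\<in>det_policies ex_A ex_A. piddg_err ex_A ex_S ex_P ex_Cw ex_Cl M)"
  using ex_policy_in_policies ex_policy_err_le(2) ex_piddg_err_det_ge
    ckddg_err_nonneg[OF ex_is_ckddg]
    ckddg_err_le_piddg_err[OF ex_is_piddg ex_types_inj(2)]
  by (intro INF_policies_less_INF_det_policies[where c = "1 / 2"]) (auto intro: order_trans)

theorem proposition3p6:
  shows "(\<exists>(A1::nat set) (A2::nat set) (S::nat set) P C1 C2 u.
            is_ckdg A1 A2 S P C1 C2 u \<and>
            (INF M \<in> policies A1 A2. ckdg_err S P C1 C2 u M)
              < (INF M \<in> det_policies A1 A2. ckdg_err S P C1 C2 u M)) \<and>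
         (\<exists>(A::nat set) (S::nat set) P Cw Cl.
            is_ckddg A S P Cw Cl \<and>
            (INF M \<in> policies A A. ckddg_err S P Cw Cl M)
              < (INF M \<in> det_policies A A. ckddg_err S P Cw Cl M)) \<and>
         (\<exists>(A::nat set) (S::nat set) P Cw Cl.
            is_piddg A S P Cw Cl \<and>
            (INF M \<in> policies A A. piddg_err A S P Cw Cl M)
              < (INF M \<in> det_policies A A. piddg_err A S P Cw Cl M))"
proof -
  obtain S' :: "nat set" and P' C1 C2 u where ckdg: "is_ckdg ex_A ex_A S' P' C1 C2 u"
    and err: "\<And>M. ckdg_err S' P' C1 C2 u M = ckddg_err ex_S ex_P ex_Cw ex_Cl M"
    using ckdg_of_ckddg[OF ex_is_ckddg] by blast
  have "(INF M\<in>policies ex_A ex_A. ckdg_err S' P' C1 C2 u M)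
      < (INF M\<in>det_policies ex_A ex_A. ckdg_err S' P' C1 C2 u M)"
    unfolding err by (fact ex_ckddg_gap)
  with ckdg ex_is_ckddg ex_ckddg_gap ex_is_piddg ex_piddg_gap show ?thesis
    by blast
qed

end
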